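(* Let $\hat Q^\pi\in\mathcal H$ be the kernel TD estimator, i.e. a function satisfying $$\hat Q^\pi\in\arg\min_{f\in\mathcal H}\ \frac1n\sum_{i=1}^n\Big(f(\omega_0^{(i)})-r(\omega_0^{(i)})-\gamma\hat Q^\pi(\omega_1^{(i)})\Big)^2+\lambda\|f\|_{\mathcal H}^2 .$$ Then $\hat Q^\pi$ has the closed form $$\hat Q^\pi=K(\cdot,\boldsymbol\omega_0)\,\mathbf b^\pi=\sum_{i=1}^n b^\pi_i K(\cdot,\omega_0^{(i)}),\qquad \mathbf b^\pi=\big[\mathbf K+\lambda n\mathrm I-\gamma\mathbf C\big]^{-1}\mathbf r,$$ where $\mathbf K_{i,j}=K(\omega_0^{(i)},\omega_0^{(j)})$, $\mathbf C_{i,j}=K(\omega_1^{(i)},\omega_0^{(j)})$ and $\mathbf r=[r(\omega_0^{(1)}),\dots,r(\omega_0^{(n)})]^\top$.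
   Context: Markov decision process $(\mathcal S,\mathcal A,P,r,\gamma)$ with compact convex $\mathcal S\subset\mathbb R^{d_s}$, $\mathcal A\subset\mathbb R^{d_a}$, transition density $P(\cdot\mid s,a)$, reward $r:\mathcal S\times\mathcal A\to\mathbb R$, discount $\gamma\in[0,1]$; $\pi$ is a fixed policy. Write $\omega=(s,a)$. $K$ is a symmetric positive definite kernel on $\mathcal S\times\mathcal A$ with $\max_\omega K(\omega,\omega)<\infty$, $\mathcal H$ its RKHS, and $\lambda>0$. Data: for $i=1,\dots,n$, independently $s_0^{(i)}\sim\mu_0$, $a_0^{(i)}\sim\pi(\cdot\mid s_0^{(i)})$, $s_1^{(i)}\sim P(\cdot\mid s_0^{(i)},a_0^{(i)})$, $a_1^{(i)}\sim\pi(\cdot\mid s_1^{(i)})$, where $\mu_0$ is a chosen initial state distribution; $\omega_j^{(i)}=(s_j^{(i)},a_j^{(i)})$ for $j=0,1$, and $\boldsymbol\omega_0=(\omega_0^{(1)},\dots,\omega_0^{(n)})$. *)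

theory Defs
  imports "HOL-Analysis.Analysis"
begin

definition pd_kernel :: "'x set \<Rightarrow> ('x \<Rightarrow> 'x \<Rightarrow> real) \<Rightarrow> bool" where
  "pd_kernel \<Omega> K \<longleftrightarrow>
     (\<forall>x\<in>\<Omega>. \<forall>y\<in>\<Omega>. K x y = K y x) \<and>
     (\<forall>(m::nat) (p::nat \<Rightarrow> 'x) (c::nat \<Rightarrow> real). (\<forall>i<m. p i \<in> \<Omega>) \<longrightarrow>
        (\<Sum>i<m. \<Sum>j<m. c i * c j * K (p i) (p j)) \<ge> 0)"

text \<open>A Hilbert space H (a type 'h) together with an evaluation map ev is the
  reproducing kernel Hilbert space of K on Omega, with kernel sections ksec:
  the elements of H are functions on Omega (ev is injective on Omega),
  ksec x is the function K(.,x), and the reproducing property holds.\<close>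
definition is_RKHS ::
  "'x set \<Rightarrow> ('x \<Rightarrow> 'x \<Rightarrow> real) \<Rightarrow> ('h::{real_inner,complete_space} \<Rightarrow> 'x \<Rightarrow> real)
     \<Rightarrow> ('x \<Rightarrow> 'h) \<Rightarrow> bool" where
  "is_RKHS \<Omega> K ev ksec \<longleftrightarrow>
     (\<forall>f g. (\<forall>x\<in>\<Omega>. ev f x = ev g x) \<longrightarrow> f = g) \<and>
     (\<forall>x\<in>\<Omega>. \<forall>y\<in>\<Omega>. ev (ksec x) y = K y x) \<and>
     (\<forall>f. \<forall>x\<in>\<Omega>. ev f x = inner f (ksec x))"

text \<open>Kernel TD objective, sample size n = CARD('n), data w0 i = omega_0^(i), w1 i = omega_1^(i).\<close>
definition td_objective ::
  "('h::real_inner \<Rightarrow> 'x \<Rightarrow> real) \<Rightarrow> ('x \<Rightarrow> real) \<Rightarrow> real \<Rightarrow> real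
     \<Rightarrow> ('n::finite \<Rightarrow> 'x) \<Rightarrow> ('n \<Rightarrow> 'x) \<Rightarrow> 'h \<Rightarrow> 'h \<Rightarrow> real" where
  "td_objective ev r \<gamma> lam w0 w1 Q f =
     (1 / real CARD('n)) * (\<Sum>i\<in>UNIV. (ev f (w0 i) - r (w0 i) - \<gamma> * ev Q (w1 i))^2)
     + lam * (norm f)^2"

definition td_matrix ::
  "('x \<Rightarrow> 'x \<Rightarrow> real) \<Rightarrow> real \<Rightarrow> real \<Rightarrow> ('n::finite \<Rightarrow> 'x) \<Rightarrow> ('n \<Rightarrow> 'x) \<Rightarrow> real^'n^'n" where
  "td_matrix K \<gamma> lam w0 w1 =
     (\<chi> i j. K (w0 i) (w0 j) + (if i = j then lam * real CARD('n) else 0) - \<gamma> * K (w1 i) (w0 j))"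

end

theory Submission
  imports Defs
begin

text \<open>Freezing the target \<open>r(\<omega>\<^sub>0\<^sup>i) + \<gamma> Qhat(\<omega>\<^sub>1\<^sup>i)\<close> at the minimiser itself turns the
  TD objective into an ordinary kernel ridge regression objective. Its minimiser is stationary
  in the direction of its own gradient, so it is a combination \<open>\<Sum>\<^sub>i c\<^sub>i K(\<cdot>, \<omega>\<^sub>0\<^sup>i)\<close> in which
  \<open>\<lambda> n c\<^sub>i\<close> is the TD error \<open>r(\<omega>\<^sub>0\<^sup>i) + \<gamma> Qhat(\<omega>\<^sub>1\<^sup>i) - Qhat(\<omega>\<^sub>0\<^sup>i)\<close>. Evaluating \<open>Qhat\<close>
  through the reproducing property turns these \<open>n\<close> equations into the linear system
  \<open>(\<^bold>K + \<lambda> n I - \<gamma> \<^bold>C) c = \<^bold>r\<close>.\<close>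

lemma quadratic_nonneg_imp_linear_coeff_zero:
  fixes a b :: real
  assumes "\<And>t. 0 \<le> a * t\<^sup>2 + b * t"
  shows "b = 0"
proof -
  define e where "e = 1 / (\<bar>a\<bar> + 1)"
  have e_pos: "e > 0" unfolding e_def by (simp add: add_pos_nonneg)
  have ae: "a * e < 1" unfolding e_def
    by (simp add: divide_simps) (smt (verit))
  have "0 \<le> a * (- b * e)\<^sup>2 + b * (- b * e)" using assms by blast
  also have "\<dots> = b\<^sup>2 * e * (a * e - 1)" by (simp add: power2_eq_square algebra_simps)
  finally have "0 \<le> b\<^sup>2 * e * (a * e - 1)" .
  moreover have "b\<^sup>2 * e * (a * e - 1) \<le> 0"
    using e_pos ae by (simp add: mult_nonneg_nonpos)
  ultimately show ?thesis using e_pos ae by (simp add: mult_le_0_iff)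
qed

definition ridge_objective ::
  "'i set \<Rightarrow> real \<Rightarrow> real \<Rightarrow> ('i \<Rightarrow> 'h::real_inner) \<Rightarrow> ('i \<Rightarrow> real) \<Rightarrow> 'h \<Rightarrow> real" where
  "ridge_objective I \<mu> lam k y f = \<mu> * (\<Sum>i\<in>I. (inner f (k i) - y i)\<^sup>2) + lam * (norm f)\<^sup>2"

lemma ridge_objective_along_line:
  fixes k :: "'i \<Rightarrow> 'h::real_inner"
  assumes "finite I"
  shows "ridge_objective I \<mu> lam k y (Q + t *\<^sub>R v) - ridge_objective I \<mu> lam k y Q
    = (\<mu> * (\<Sum>i\<in>I. (inner v (k i))\<^sup>2) + lam * (norm v)\<^sup>2) * t\<^sup>2
      + 2 * inner v (lam *\<^sub>R Q + \<mu> *\<^sub>R (\<Sum>i\<in>I. (inner Q (k i) - y i) *\<^sub>R k i)) * t"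
proof -
  define e where "e i = inner Q (k i) - y i" for i
  have residual: "(inner (Q + t *\<^sub>R v) (k i) - y i)\<^sup>2
      = (e i)\<^sup>2 + 2 * t * (e i * inner v (k i)) + t\<^sup>2 * (inner v (k i))\<^sup>2" for i
    by (simp add: e_def power2_eq_square algebra_simps)
  have norm_sq: "(norm (Q + t *\<^sub>R v))\<^sup>2 = (norm Q)\<^sup>2 + 2 * t * inner Q v + t\<^sup>2 * (norm v)\<^sup>2"
    unfolding power2_norm_eq_inner
    by (simp add: inner_commute[of v Q] power2_eq_square algebra_simps)
  have gradient: "inner v (lam *\<^sub>R Q + \<mu> *\<^sub>R (\<Sum>i\<in>I. e i *\<^sub>R k i))
      = lam * inner Q v + \<mu> * (\<Sum>i\<in>I. e i * inner v (k i))"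
    by (simp add: inner_add_right inner_sum_right inner_commute[of v Q])
  show ?thesis
    unfolding ridge_objective_def residual norm_sq e_def[symmetric] gradient
    by (simp add: sum.distrib sum_distrib_left algebra_simps)
qed

lemma ridge_minimizer_stationary:
  fixes k :: "'i \<Rightarrow> 'h::real_inner"
  assumes "finite I"
    and "\<And>f. ridge_objective I \<mu> lam k y Q \<le> ridge_objective I \<mu> lam k y f"
  shows "lam *\<^sub>R Q + \<mu> *\<^sub>R (\<Sum>i\<in>I. (inner Q (k i) - y i) *\<^sub>R k i) = 0"
    (is "?v = 0")
proof -
  have "0 \<le> (\<mu> * (\<Sum>i\<in>I. (inner ?v (k i))\<^sup>2) + lam * (norm ?v)\<^sup>2) * t\<^sup>2
      + 2 * inner ?v ?v * t" for t
    using assms(2)[of "Q + t *\<^sub>R ?v"] ridge_objective_along_line[OF assms(1), of \<mu> lam k y Q t ?v]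
    by linarith
  then have "2 * inner ?v ?v = 0" by (rule quadratic_nonneg_imp_linear_coeff_zero)
  then show ?thesis by simp
qed

lemma ridge_minimizer_representer:
  fixes k :: "'i \<Rightarrow> 'h::real_inner"
  assumes "finite I" and "lam \<noteq> 0"
    and "\<And>f. ridge_objective I \<mu> lam k y Q \<le> ridge_objective I \<mu> lam k y f"
  shows "Q = (\<Sum>i\<in>I. (\<mu> / lam * (y i - inner Q (k i))) *\<^sub>R k i)"
proof -
  have "Q = (1 / lam) *\<^sub>R (lam *\<^sub>R Q)"
    using assms(2) by simp
  also have "lam *\<^sub>R Q = - \<mu> *\<^sub>R (\<Sum>i\<in>I. (inner Q (k i) - y i) *\<^sub>R k i)"
    using ridge_minimizer_stationary[OF assms(1,3)] by (simp add: eq_neg_iff_add_eq_0)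
  also have "(1 / lam) *\<^sub>R \<dots> = (\<Sum>i\<in>I. (\<mu> / lam * (y i - inner Q (k i))) *\<^sub>R k i)"
    by (simp add: scaleR_sum_right algebra_simps)
  finally show ?thesis .
qed

lemma RKHS_eval_eq_inner:
  "is_RKHS \<Omega> K ev ksec \<Longrightarrow> x \<in> \<Omega> \<Longrightarrow> ev f x = inner f (ksec x)"
  unfolding is_RKHS_def by blast

lemma RKHS_eval_kernel_section:
  "is_RKHS \<Omega> K ev ksec \<Longrightarrow> x \<in> \<Omega> \<Longrightarrow> y \<in> \<Omega> \<Longrightarrow> ev (ksec x) y = K y x"
  unfolding is_RKHS_def by blast

lemma RKHS_eval_kernel_combination:
  assumes "is_RKHS \<Omega> K ev ksec" and "x \<in> \<Omega>" and "\<And>i. i \<in> I \<Longrightarrow> p i \<in> \<Omega>"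
  shows "ev (\<Sum>i\<in>I. c i *\<^sub>R ksec (p i)) x = (\<Sum>i\<in>I. c i * K x (p i))"
proof -
  have "ev (\<Sum>i\<in>I. c i *\<^sub>R ksec (p i)) x = (\<Sum>i\<in>I. c i * inner (ksec (p i)) (ksec x))"
    using RKHS_eval_eq_inner[OF assms(1,2)] by (simp add: inner_sum_left)
  also have "\<dots> = (\<Sum>i\<in>I. c i * K x (p i))"
    using RKHS_eval_eq_inner[OF assms(1,2)] RKHS_eval_kernel_section[OF assms(1) assms(3) assms(2)]
    by (intro sum.cong) auto
  finally show ?thesis .
qed

lemma td_objective_eq_ridge_objective:
  fixes w0 w1 :: "'n::finite \<Rightarrow> 'x"
  assumes "is_RKHS \<Omega> K ev ksec" and "\<And>i. w0 i \<in> \<Omega>"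
  shows "td_objective ev r \<gamma> lam w0 w1 Q f
    = ridge_objective UNIV (1 / real CARD('n)) lam (\<lambda>i. ksec (w0 i))
        (\<lambda>i. r (w0 i) + \<gamma> * ev Q (w1 i)) f"
  using RKHS_eval_eq_inner[OF assms(1,2)]
  unfolding td_objective_def ridge_objective_def by (simp add: algebra_simps)

lemma td_matrix_mult_vec_nth:
  fixes w0 w1 :: "'n::finite \<Rightarrow> 'x"
  shows "(td_matrix K \<gamma> lam w0 w1 *v c) $ j
    = (\<Sum>i\<in>UNIV. c $ i * K (w0 j) (w0 i)) + lam * real CARD('n) * c $ j
      - \<gamma> * (\<Sum>i\<in>UNIV. c $ i * K (w1 j) (w0 i))"
proof -
  have "(td_matrix K \<gamma> lam w0 w1 *v c) $ j = (\<Sum>i\<in>UNIV. c $ i * K (w0 j) (w0 i)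
      + (if i = j then lam * real CARD('n) * c $ i else 0) - \<gamma> * (c $ i * K (w1 j) (w0 i)))"
    unfolding td_matrix_def matrix_vector_mult_def vec_lambda_beta
    by (intro sum.cong) (auto simp: algebra_simps)
  then show ?thesis by (simp add: sum.distrib sum_subtractf sum_distrib_left)
qed

lemma matrix_inv_mult_vec_solution:
  fixes M :: "real^'n^'n"
  assumes "invertible M" and "M *v x = y"
  shows "matrix_inv M *v y = x"
proof -
  have "matrix_inv M ** M = mat 1"
    using someI_ex[OF assms(1)[unfolded invertible_def]] unfolding matrix_inv_def by blast
  then show ?thesis
    using assms(2) by (metis matrix_vector_mul_assoc matrix_vector_mul_lid)
qed

theorem proposition1:
  fixes S :: "'s::euclidean_space set" and A :: "'a::euclidean_space set"
    and K :: "'s \<times> 'a \<Rightarrow> 's \<times> 'a \<Rightarrow> real"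
    and ev :: "'h::{real_inner,complete_space} \<Rightarrow> 's \<times> 'a \<Rightarrow> real"
    and ksec :: "'s \<times> 'a \<Rightarrow> 'h"
    and r :: "'s \<times> 'a \<Rightarrow> real" and \<gamma> lam :: real
    and w0 w1 :: "'n::finite \<Rightarrow> 's \<times> 'a"
    and Qhat :: 'h
  assumes "compact S" "convex S" "compact A" "convex A"
    and "pd_kernel (S \<times> A) K"
    and "bdd_above ((\<lambda>w. K w w) ` (S \<times> A))"
    and "is_RKHS (S \<times> A) K ev ksec"
    and "0 \<le> \<gamma>" "\<gamma> \<le> 1" "0 < lam"
    and "\<And>i. w0 i \<in> S \<times> A" "\<And>i. w1 i \<in> S \<times> A"
    and "invertible (td_matrix K \<gamma> lam w0 w1)"
    and "\<And>f. td_objective ev r \<gamma> lam w0 w1 Qhat Qhat \<le> td_objective ev r \<gamma> lam w0 w1 Qhat f"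
  shows "Qhat = (let b = matrix_inv (td_matrix K \<gamma> lam w0 w1) *v (\<chi> i. r (w0 i))
                 in \<Sum>i\<in>UNIV. b $ i *\<^sub>R ksec (w0 i))"
proof -
  define n where "n = real CARD('n)"
  define c where "c = (\<chi> i. (r (w0 i) + \<gamma> * ev Qhat (w1 i) - ev Qhat (w0 i)) / (n * lam))"
  have minimizer: "\<And>f. ridge_objective UNIV (1 / n) lam (\<lambda>i. ksec (w0 i))
        (\<lambda>i. r (w0 i) + \<gamma> * ev Qhat (w1 i)) Qhat
      \<le> ridge_objective UNIV (1 / n) lam (\<lambda>i. ksec (w0 i))
        (\<lambda>i. r (w0 i) + \<gamma> * ev Qhat (w1 i)) f"
    using assms(14) unfolding td_objective_eq_ridge_objective[OF assms(7,11)] n_def .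
  have "Qhat = (\<Sum>i\<in>UNIV. (1 / n / lam * (r (w0 i) + \<gamma> * ev Qhat (w1 i)
      - inner Qhat (ksec (w0 i)))) *\<^sub>R ksec (w0 i))"
    by (rule ridge_minimizer_representer[OF finite_class.finite_UNIV _ minimizer]) (use assms(10) in simp)
  also have "\<dots> = (\<Sum>i\<in>UNIV. c $ i *\<^sub>R ksec (w0 i))"
    using RKHS_eval_eq_inner[OF assms(7,11)] by (simp add: c_def)
  finally have Qhat_expansion: "Qhat = (\<Sum>i\<in>UNIV. c $ i *\<^sub>R ksec (w0 i))" .
  have eval_Qhat: "ev Qhat x = (\<Sum>i\<in>UNIV. c $ i * K x (w0 i))" if "x \<in> S \<times> A" for x
    by (subst Qhat_expansion) (rule RKHS_eval_kernel_combination[OF assms(7) that assms(11)])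
  have "lam * n * c $ i = r (w0 i) + \<gamma> * ev Qhat (w1 i) - ev Qhat (w0 i)" for i
    using assms(10) by (simp add: c_def n_def)
  then have "td_matrix K \<gamma> lam w0 w1 *v c = (\<chi> i. r (w0 i))"
    by (simp add: vec_eq_iff td_matrix_mult_vec_nth eval_Qhat[symmetric] assms(11,12)
        flip: n_def)
  then have "matrix_inv (td_matrix K \<gamma> lam w0 w1) *v (\<chi> i. r (w0 i)) = c"
    by (rule matrix_inv_mult_vec_solution[OF assms(13)])
  with Qhat_expansion show ?thesis by simp
qed

end
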